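(* For all integers $t\ge0$, $\mathcal K(t)\ge0$.
   Context: Given $n$, nonnegative numbers $\sigma_1^2,\dots,\sigma_n^2$, $\gamma>0$, $\zeta\in(0,1]$, $\Delta\in[0,1)$. For $j\in[n]$: $\Omega_j=1-\gamma\zeta\sigma_j^2+\Delta$, $\lambda_{2,j},\lambda_{3,j}=\frac{-2\Delta+\Omega_j^2\pm\sqrt{\Omega_j^2(\Omega_j^2-4\Delta)}}{2}$ (complex square root if the argument is negative). $\mathcal K(t)=\gamma^2\zeta(1-\zeta)H_2(t)$ with $H_2(t)=\frac1n\sum_{j=1}^n\frac{2\sigma_j^4}{\Omega_j^2-4\Delta}\big(-\Delta^{t+1}+\frac12\lambda_{2,j}^{t+1}+\frac12\lambda_{3,j}^{t+1}\big)$ (terms with $\Omega_j^2=4\Delta$ understood by continuity). *)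

theory Defs
  imports "HOL-Analysis.Analysis"
begin

definition Omega :: "real \<Rightarrow> real \<Rightarrow> real \<Rightarrow> real \<Rightarrow> real" where
  "Omega \<gamma> \<zeta> \<Delta> s2 = 1 - \<gamma> * \<zeta> * s2 + \<Delta>"

text \<open>lambda_2, lambda_3 (complex square root of a possibly negative real).\<close>
definition lam2 :: "real \<Rightarrow> real \<Rightarrow> complex" where
  "lam2 \<Delta> \<Omega> = (complex_of_real (-2*\<Delta> + \<Omega>^2)
      + csqrt (complex_of_real (\<Omega>^2 * (\<Omega>^2 - 4*\<Delta>)))) / 2"

definition lam3 :: "real \<Rightarrow> real \<Rightarrow> complex" where
  "lam3 \<Delta> \<Omega> = (complex_of_real (-2*\<Delta> + \<Omega>^2)
      - csqrt (complex_of_real (\<Omega>^2 * (\<Omega>^2 - 4*\<Delta>)))) / 2"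

text \<open>The raw summand of H_2 as a function of Omega (s2 = sigma_j^2, so sigma_j^4 = s2^2).\<close>
definition Hraw :: "real \<Rightarrow> real \<Rightarrow> nat \<Rightarrow> real \<Rightarrow> complex" where
  "Hraw s2 \<Delta> t \<Omega> = complex_of_real (2 * s2^2 / (\<Omega>^2 - 4*\<Delta>)) *
     (- ((complex_of_real \<Delta>) ^ (t+1)) + (lam2 \<Delta> \<Omega>) ^ (t+1) / 2 + (lam3 \<Delta> \<Omega>) ^ (t+1) / 2)"

text \<open>Summand extended by continuity (in Omega) where Omega^2 = 4 Delta.\<close>
definition Hterm :: "real \<Rightarrow> real \<Rightarrow> nat \<Rightarrow> real \<Rightarrow> complex" where
  "Hterm s2 \<Delta> t \<Omega> = (if \<Omega>^2 = 4*\<Delta> then Lim (at \<Omega>) (Hraw s2 \<Delta> t) else Hraw s2 \<Delta> t \<Omega>)"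

text \<open>H_2(t); sigma2 j = sigma_j^2 for j = 1..n. The value is real; we take the real part.\<close>
definition H2 :: "nat \<Rightarrow> (nat \<Rightarrow> real) \<Rightarrow> real \<Rightarrow> real \<Rightarrow> real \<Rightarrow> nat \<Rightarrow> real" where
  "H2 n sigma2 \<gamma> \<zeta> \<Delta> t =
     (1 / real n) * (\<Sum>j=1..n. Re (Hterm (sigma2 j) \<Delta> t (Omega \<gamma> \<zeta> \<Delta> (sigma2 j))))"

definition KK :: "nat \<Rightarrow> (nat \<Rightarrow> real) \<Rightarrow> real \<Rightarrow> real \<Rightarrow> real \<Rightarrow> nat \<Rightarrow> real" where
  "KK n sigma2 \<gamma> \<zeta> \<Delta> t = \<gamma>^2 * \<zeta> * (1 - \<zeta>) * H2 n sigma2 \<gamma> \<zeta> \<Delta> t"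

end

theory Submission
  imports Defs
begin

text \<open>Let \<open>\<mu>, \<nu>\<close> be the roots of \<open>x\<^sup>2 - \<Omega> x + \<Delta>\<close>. Then \<open>\<lambda>\<^sub>2, \<lambda>\<^sub>3\<close> are \<open>\<mu>\<^sup>2, \<nu>\<^sup>2\<close>
  and \<open>\<Omega>\<^sup>2 - 4\<Delta> = (\<mu> - \<nu>)\<^sup>2\<close>, so with \<open>k = t + 1\<close> each summand of \<open>H\<^sub>2\<close> equals
  \<open>\<sigma>\<^sup>4 (\<mu>\<^sup>k - \<nu>\<^sup>k)\<^sup>2 / (\<mu> - \<nu>)\<^sup>2 = \<sigma>\<^sup>4 U\<^sub>k(\<Omega>, \<Delta>)\<^sup>2\<close>, where \<open>U\<^sub>k\<close> is the Lucas sequence,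
  a real polynomial in \<open>\<Omega>\<close>. Being a square, it is nonnegative, and as it is continuous in \<open>\<Omega>\<close>
  the same value is the continuous extension at \<open>\<Omega>\<^sup>2 = 4\<Delta>\<close>.\<close>

fun lucas_U :: "nat \<Rightarrow> 'a::comm_ring_1 \<Rightarrow> 'a \<Rightarrow> 'a" where
  "lucas_U 0 P Q = 0"
| "lucas_U (Suc 0) P Q = 1"
| "lucas_U (Suc (Suc k)) P Q = P * lucas_U (Suc k) P Q - Q * lucas_U k P Q"

lemma lucas_U_power_diff:
  fixes \<mu> \<nu> :: "'a::comm_ring_1"
  assumes "\<mu> + \<nu> = P" and "\<mu> * \<nu> = Q"
  shows "(\<mu> - \<nu>) * lucas_U k P Q = \<mu> ^ k - \<nu> ^ k"
  using assms
proof (induction k P Q rule: lucas_U.induct)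
  case (3 k P Q)
  have "(\<mu> - \<nu>) * lucas_U (Suc (Suc k)) P Q
        = P * ((\<mu> - \<nu>) * lucas_U (Suc k) P Q) - Q * ((\<mu> - \<nu>) * lucas_U k P Q)"
    by (simp add: algebra_simps)
  also have "\<dots> = (\<mu> + \<nu>) * (\<mu> ^ Suc k - \<nu> ^ Suc k) - (\<mu> * \<nu>) * (\<mu> ^ k - \<nu> ^ k)"
    using 3 by simp
  also have "\<dots> = \<mu> ^ Suc (Suc k) - \<nu> ^ Suc (Suc k)"
    by (simp add: algebra_simps)
  finally show ?case .
qed simp_all

lemma of_real_lucas_U: "of_real (lucas_U k P Q) = lucas_U k (of_real P) (of_real Q)"
  by (induction k P Q rule: lucas_U.induct) simp_all

lemma continuous_on_lucas_U [continuous_intros]: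
  fixes f g :: "'b::topological_space \<Rightarrow> 'a::{comm_ring_1, real_normed_algebra}"
  assumes "continuous_on S f" "continuous_on S g"
  shows "continuous_on S (\<lambda>x. lucas_U k (f x) (g x))"
  by (induction k rule: lucas_U.induct[where P = "\<lambda>k _ _. continuous_on S (\<lambda>x. lucas_U k (f x) (g x))"])
     (auto intro!: continuous_intros assms)

lemma lam_power_sum:
  fixes \<mu> \<nu> :: complex
  assumes sum: "\<mu> + \<nu> = of_real \<Omega>" and prod: "\<mu> * \<nu> = of_real \<Delta>"
  shows "lam2 \<Delta> \<Omega> ^ k + lam3 \<Delta> \<Omega> ^ k = (\<mu> ^ k)\<^sup>2 + (\<nu> ^ k)\<^sup>2"
proof -
  define q where "q = csqrt (complex_of_real (\<Omega>\<^sup>2 * (\<Omega>\<^sup>2 - 4 * \<Delta>)))"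
  have "complex_of_real (\<Omega>\<^sup>2 - 4 * \<Delta>) = (\<mu> - \<nu>)\<^sup>2"
    by (simp add: sum[symmetric] prod[symmetric] power2_eq_square algebra_simps)
  then have "q\<^sup>2 = (of_real \<Omega> * (\<mu> - \<nu>))\<^sup>2"
    by (simp add: q_def power_mult_distrib)
  then have q: "q = of_real \<Omega> * (\<mu> - \<nu>) \<or> q = - (of_real \<Omega> * (\<mu> - \<nu>))"
    by (simp add: power2_eq_iff)
  have \<mu>2: "\<mu>\<^sup>2 = (complex_of_real (-2 * \<Delta> + \<Omega>\<^sup>2) + of_real \<Omega> * (\<mu> - \<nu>)) / 2"
   and \<nu>2: "\<nu>\<^sup>2 = (complex_of_real (-2 * \<Delta> + \<Omega>\<^sup>2) - of_real \<Omega> * (\<mu> - \<nu>)) / 2"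
    by (simp_all add: sum[symmetric] prod[symmetric] power2_eq_square field_simps)
  have "lam2 \<Delta> \<Omega> = \<mu>\<^sup>2 \<and> lam3 \<Delta> \<Omega> = \<nu>\<^sup>2 \<or> lam2 \<Delta> \<Omega> = \<nu>\<^sup>2 \<and> lam3 \<Delta> \<Omega> = \<mu>\<^sup>2"
    using q unfolding lam2_def lam3_def q_def[symmetric] \<mu>2 \<nu>2 by auto
  then show ?thesis
    by (auto simp: power_mult[symmetric] mult.commute)
qed

lemma lam_power_sum_minus_eq_square:
  "lam2 \<Delta> \<Omega> ^ k + lam3 \<Delta> \<Omega> ^ k - 2 * of_real \<Delta> ^ k
     = of_real ((\<Omega>\<^sup>2 - 4 * \<Delta>) * (lucas_U k \<Omega> \<Delta>)\<^sup>2)"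
proof -
  define r where "r = csqrt (of_real (\<Omega>\<^sup>2 - 4 * \<Delta>))"
  define \<mu> where "\<mu> = (of_real \<Omega> + r) / 2"
  define \<nu> where "\<nu> = (of_real \<Omega> - r) / 2"
  have r2: "r\<^sup>2 = of_real (\<Omega>\<^sup>2 - 4 * \<Delta>)"
    by (simp add: r_def)
  have sum: "\<mu> + \<nu> = of_real \<Omega>" and diff: "\<mu> - \<nu> = r"
    by (simp_all add: \<mu>_def \<nu>_def field_simps)
  have prod: "\<mu> * \<nu> = of_real \<Delta>"
    using r2 by (simp add: \<mu>_def \<nu>_def field_simps power2_eq_square)
  have U: "\<mu> ^ k - \<nu> ^ k = r * of_real (lucas_U k \<Omega> \<Delta>)"
    using lucas_U_power_diff[OF sum prod, of k] by (simp add: diff of_real_lucas_U)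
  have "lam2 \<Delta> \<Omega> ^ k + lam3 \<Delta> \<Omega> ^ k - 2 * of_real \<Delta> ^ k = (\<mu> ^ k - \<nu> ^ k)\<^sup>2"
    by (simp add: lam_power_sum[OF sum prod] prod[symmetric] power_mult_distrib power2_diff)
  also have "\<dots> = of_real ((\<Omega>\<^sup>2 - 4 * \<Delta>) * (lucas_U k \<Omega> \<Delta>)\<^sup>2)"
    by (simp add: U power_mult_distrib r2)
  finally show ?thesis .
qed

lemma Hraw_eq_lam_power_sum:
  "Hraw s2 \<Delta> t \<Omega> = of_real (s2\<^sup>2 / (\<Omega>\<^sup>2 - 4 * \<Delta>))
     * (lam2 \<Delta> \<Omega> ^ (t + 1) + lam3 \<Delta> \<Omega> ^ (t + 1) - 2 * of_real \<Delta> ^ (t + 1))"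
proof -
  \<comment> \<open>Naming the coefficient keeps \<open>simp\<close> from distributing \<open>of_real\<close> over the quotient.\<close>
  obtain c where c: "complex_of_real (s2\<^sup>2 / (\<Omega>\<^sup>2 - 4 * \<Delta>)) = c"
    by blast
  then have "complex_of_real (2 * s2\<^sup>2 / (\<Omega>\<^sup>2 - 4 * \<Delta>)) = 2 * c"
    by (simp flip: c)
  then show ?thesis
    unfolding Hraw_def c by (simp add: field_simps)
qed

lemma Hraw_eq_square:
  assumes "\<Omega>\<^sup>2 \<noteq> 4 * \<Delta>"
  shows "Hraw s2 \<Delta> t \<Omega> = of_real (s2\<^sup>2 * (lucas_U (t + 1) \<Omega> \<Delta>)\<^sup>2)"
  unfolding Hraw_eq_lam_power_sum lam_power_sum_minus_eq_square of_real_mult[symmetric]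
  using assms by simp

lemma Hterm_eq_square: "Hterm s2 \<Delta> t \<Omega> = of_real (s2\<^sup>2 * (lucas_U (t + 1) \<Omega> \<Delta>)\<^sup>2)"
proof (cases "\<Omega>\<^sup>2 = 4 * \<Delta>")
  case False
  then show ?thesis
    by (simp add: Hterm_def Hraw_eq_square)
next
  case True
  define g where "g x = complex_of_real (s2\<^sup>2 * (lucas_U (t + 1) x \<Delta>)\<^sup>2)" for x
  have "continuous_on UNIV g"
    unfolding g_def by (intro continuous_intros)
  then have "(g \<longlongrightarrow> g \<Omega>) (at \<Omega>)"
    by (simp add: continuous_on_def)
  moreover have "\<forall>\<^sub>F x in at \<Omega>. x \<notin> {\<Omega>, -\<Omega>}"
    using islimpt_finite[of "{\<Omega>, -\<Omega>}" \<Omega>] by (simp add: islimpt_iff_eventually)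
  then have "\<forall>\<^sub>F x in at \<Omega>. Hraw s2 \<Delta> t x = g x"
  proof (rule eventually_mono)
    fix x :: real
    assume "x \<notin> {\<Omega>, -\<Omega>}"
    then have "x\<^sup>2 \<noteq> 4 * \<Delta>"
      using True power2_eq_iff[of x \<Omega>] by simp
    then show "Hraw s2 \<Delta> t x = g x"
      by (simp add: Hraw_eq_square g_def)
  qed
  ultimately have "(Hraw s2 \<Delta> t \<longlongrightarrow> g \<Omega>) (at \<Omega>)"
    by (simp add: tendsto_cong)
  then show ?thesis
    using True by (simp add: Hterm_def g_def tendsto_Lim)
qed

theorem lemma5:
  fixes n :: nat and sigma2 :: "nat \<Rightarrow> real" and \<gamma> \<zeta> \<Delta> :: real and t :: nat
  assumes "\<And>j. j \<in> {1..n} \<Longrightarrow> sigma2 j \<ge> 0"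
    and "\<gamma> > 0" and "0 < \<zeta>" and "\<zeta> \<le> 1" and "0 \<le> \<Delta>" and "\<Delta> < 1"
  shows "KK n sigma2 \<gamma> \<zeta> \<Delta> t \<ge> 0"
proof -
  have "H2 n sigma2 \<gamma> \<zeta> \<Delta> t \<ge> 0"
    unfolding H2_def Hterm_eq_square by (simp add: sum_nonneg)
  then show ?thesis
    unfolding KK_def using assms by simp
qed

end
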